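(* For any finite-dimensional complex Lie algebra $\mathfrak{h}$, $\mathcal{F}(\mathcal{C}^\bullet\mathfrak{h},\mathfrak{sl}_2)_{(0)}=\mathcal{F}^1(\mathcal{C}^\bullet\mathfrak{h},\mathfrak{sl}_2)_{(0)}$.
   Context: $\mathcal{C}^\bullet\mathfrak{h}=(\bigwedge^\bullet\mathfrak{h}^*,d)$ is the Chevalley–Eilenberg cochain cdga of $\mathfrak{h}$. For a cdga $A$ and finite-dimensional Lie algebra $\mathfrak{g}$, $\mathcal{F}(A,\mathfrak{g})=\{\omega\in A^1\otimes\mathfrak{g}: d\omega+\frac12[\omega,\omega]=0\}$ (for $\omega=\sum_k\eta_k\otimes g_k$: $\sum_k d\eta_k\otimes g_k+\sum_{k<l}\eta_k\eta_l\otimes[g_k,g_l]=0$), and $\mathcal{F}^1(A,\mathfrak{g})=\{\eta\otimes g:\eta\in A^1,\ d\eta=0,\ g\in\mathfrak{g}\}$. Equivalently, identifying $\mathfrak{h}^*\otimes\mathfrak{sl}_2=\mathrm{Hom}(\mathfrak{h},\mathfrak{sl}_2)$, $\mathcal{F}(\mathcal{C}^\bullet\mathfrak{h},\mathfrak{sl}_2)$ is the variety of Lie algebra homomorphisms $\mathfrak{h}\to\mathfrak{sl}_2$ and $\mathcal{F}^1$ the subset of those of rank at most $1$. $X_{(0)}$ denotes the analytic germ at $0$. *)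

theory Defs
  imports "HOL-Analysis.Analysis"
begin

text \<open>A finite-dimensional complex Lie algebra h of dimension n, given by its
structure constants c i j k w.r.t. a basis e_0..e_(n-1):
[e_i, e_j] = sum_k c i j k e_k.\<close>

definition is_lie_struct :: "nat \<Rightarrow> (nat \<Rightarrow> nat \<Rightarrow> nat \<Rightarrow> complex) \<Rightarrow> bool" where
  "is_lie_struct n c \<longleftrightarrow>
     (\<forall>i<n. \<forall>j<n. \<forall>k<n. c i j k = - c j i k) \<and>
     (\<forall>i<n. \<forall>j<n. \<forall>k<n. \<forall>m<n.
        (\<Sum>l<n. c i j l * c l k m + c j k l * c l i m + c k i l * c l j m) = 0)"

definition sl2 :: "(complex^2^2) set" where
  "sl2 = {A. trace A = 0}"

definition lie_br :: "complex^2^2 \<Rightarrow> complex^2^2 \<Rightarrow> complex^2^2" where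
  "lie_br A B = A ** B - B ** A"

definition msc :: "complex \<Rightarrow> complex^2^2 \<Rightarrow> complex^2^2" where
  "msc a A = (\<chi> p q. a * A$p$q)"

text \<open>An element of h^* \<otimes> sl_2 = Hom(h, sl_2), given by the images of the basis vectors.\<close>

definition hom_space :: "nat \<Rightarrow> (nat \<Rightarrow> complex^2^2) set" where
  "hom_space n = {\<phi>. (\<forall>i<n. \<phi> i \<in> sl2) \<and> (\<forall>i\<ge>n. \<phi> i = 0)}"

text \<open>F(C h, sl_2): Maurer-Cartan elements = Lie algebra homomorphisms h -> sl_2.\<close>

definition F_CE :: "nat \<Rightarrow> (nat \<Rightarrow> nat \<Rightarrow> nat \<Rightarrow> complex) \<Rightarrow> (nat \<Rightarrow> complex^2^2) set" where
  "F_CE n c = {\<phi> \<in> hom_space n.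
      \<forall>i<n. \<forall>j<n. lie_br (\<phi> i) (\<phi> j) = (\<Sum>k<n. msc (c i j k) (\<phi> k))}"

text \<open>F^1(C h, sl_2): elements eta \<otimes> g with eta a closed 1-cochain
(d eta = 0, i.e. eta vanishes on [h,h]) and g \<in> sl_2.\<close>

definition F1_CE :: "nat \<Rightarrow> (nat \<Rightarrow> nat \<Rightarrow> nat \<Rightarrow> complex) \<Rightarrow> (nat \<Rightarrow> complex^2^2) set" where
  "F1_CE n c = {\<phi> \<in> hom_space n. \<exists>(\<eta>::nat \<Rightarrow> complex) g. g \<in> sl2 \<and>
      (\<forall>i<n. \<forall>j<n. (\<Sum>k<n. c i j k * \<eta> k) = 0) \<and>
      (\<forall>i<n. \<phi> i = msc (\<eta> i) g)}"

definition germ_eq_at0 :: "nat \<Rightarrow> (nat \<Rightarrow> complex^2^2) set \<Rightarrow> (nat \<Rightarrow> complex^2^2) set \<Rightarrow> bool" where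
  "germ_eq_at0 n X Y \<longleftrightarrow> (\<exists>\<epsilon>>0. \<forall>\<phi>\<in>hom_space n. (\<forall>i<n. norm (\<phi> i) < \<epsilon>) \<longrightarrow> (\<phi> \<in> X \<longleftrightarrow> \<phi> \<in> Y))"

end

theory Submission
  imports Defs "Jordan_Normal_Form.Char_Poly"
begin

text \<open>Let \<open>\<phi>\<close> be a homomorphism \<open>h \<rightarrow> sl\<^sub>2\<close> and \<open>x \<in> h\<close>, \<open>A = \<phi> x\<close>. In \<open>sl\<^sub>2\<close> one has
\<open>ad\<^sub>A\<^sup>3 = 4 \<mu>(A) ad\<^sub>A\<close> with \<open>\<mu>(A) = -det A\<close>, and on the image of \<open>\<phi>\<close> the operator \<open>ad\<^sub>A\<close> is
induced by \<open>ad\<^sub>x\<close>. Hence every entry of \<open>ad\<^sub>A \<circ> \<phi>\<close> is a left eigenvector of \<open>ad\<^sub>x\<^sup>2\<close> for the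
eigenvalue \<open>4 \<mu>(A)\<close>. If \<open>\<phi>\<close> is small, \<open>4 \<mu>(A)\<close> is smaller than every nonzero eigenvalue of the
finitely many operators \<open>ad\<^sub>x\<^sup>2\<close>, \<open>x = e\<^sub>i + e\<^sub>j\<close>, so either \<open>A\<close> is nilpotent or \<open>A\<close> centralises the
image. Polarising over \<open>e\<^sub>i + e\<^sub>i\<close>, \<open>e\<^sub>j + e\<^sub>j\<close>, \<open>e\<^sub>i + e\<^sub>j\<close> shows that the image is abelian (two
nilpotents with nilpotent sum commute), and an abelian subalgebra of \<open>sl\<^sub>2\<close> lies in the line
spanned by any of its nonzero elements. Neither antisymmetry nor the Jacobi identity of the structure
constants enters.\<close>

lemma eventually_no_left_eigenvector:
  fixes B :: "nat \<Rightarrow> nat \<Rightarrow> complex"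
  shows "\<forall>\<^sub>F s in at 0. \<forall>r. (\<forall>l<n. (\<Sum>m<n. r m * B m l) = s * r l) \<longrightarrow> (\<forall>l<n. r l = 0)"
proof -
  define A where "A = Matrix.mat n n (\<lambda>(i,j). B j i)"
  have A: "A \<in> carrier_mat n n" unfolding A_def by simp
  have "char_poly A \<noteq> 0" using degree_monic_char_poly[OF A] by auto
  then have fin: "finite {s. poly (char_poly A) s = 0}" by (rule poly_roots_finite)
  have root: "poly (char_poly A) s = 0"
    if r: "\<forall>l<n. (\<Sum>m<n. r m * B m l) = s * r l" and nz: "\<exists>l<n. r l \<noteq> 0" for s r
  proof -
    have "eigenvector A (Matrix.vec n r) s"
      unfolding eigenvector_def
    proof (intro conjI)
      show "Matrix.vec n r \<in> carrier_vec (dim_row A)" using A by auto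
      show "Matrix.vec n r \<noteq> 0\<^sub>v (dim_row A)" using A nz by (auto simp: vec_eq_iff)
      show "A *\<^sub>v Matrix.vec n r = s \<cdot>\<^sub>v Matrix.vec n r"
        using r by (auto simp: A_def mult_mat_vec_def scalar_prod_def vec_eq_iff atLeast0LessThan
            mult.commute[of "B _ _"])
    qed
    then show ?thesis using eigenvalue_root_char_poly[OF A] unfolding eigenvalue_def by blast
  qed
  have "open (- ({s. poly (char_poly A) s = 0} - {0}))"
    using fin by (intro open_Compl finite_imp_closed) simp
  then have "\<forall>\<^sub>F s in at 0. s \<in> - ({s. poly (char_poly A) s = 0} - {0}) - {0}"
    by (rule eventually_at_in_open) simp
  then show ?thesis by eventually_elim (use root in blast)
qed

no_notation Matrix.vec_index (infixl "$" 100)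

lemma mat2_eq_iff:
  "(A::complex^2^2) = B \<longleftrightarrow> A$1$1 = B$1$1 \<and> A$1$2 = B$1$2 \<and> A$2$1 = B$2$1 \<and> A$2$2 = B$2$2"
  by (auto simp: Finite_Cartesian_Product.vec_eq_iff forall_2)

lemma lie_br_nth: "lie_br A B $ p $ q = (\<Sum>k\<in>UNIV. A$p$k * B$k$q) - (\<Sum>k\<in>UNIV. B$p$k * A$k$q)"
  by (simp add: lie_br_def matrix_matrix_mult_def)

lemma msc_nth [simp]: "msc a A $ p $ q = a * A$p$q"
  by (simp add: msc_def)

lemma sum_mat_nth [simp]: "(sum f S) $ p $ q = (\<Sum>k\<in>S. f k $ p $ q)"
  by (simp add: sum_component)

lemma sl2_iff: "A \<in> sl2 \<longleftrightarrow> A$2$2 = - A$1$1"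
  by (auto simp: sl2_def Determinants.trace_def sum_2 eq_neg_iff_add_eq_0 add.commute)

lemma sl2_add: "A \<in> sl2 \<Longrightarrow> B \<in> sl2 \<Longrightarrow> A + B \<in> sl2"
  by (simp add: sl2_iff)

lemma lie_br_add_left: "lie_br (A + B) C = lie_br A C + lie_br B C"
  by (simp add: Finite_Cartesian_Product.vec_eq_iff lie_br_nth sum_2 algebra_simps)

lemma lie_br_antisym: "lie_br B A = - lie_br A B"
  by (simp add: lie_br_def)

lemma lie_br_self: "lie_br A A = 0"
  by (simp add: lie_br_def)

lemma lie_br_sum_msc: "lie_br A (\<Sum>k\<in>S. msc (f k) (g k)) = (\<Sum>k\<in>S. msc (f k) (lie_br A (g k)))"
  by (simp add: Finite_Cartesian_Product.vec_eq_iff lie_br_nth sum_2 sum_distrib_left sum_distrib_right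
      sum.distrib sum_subtractf right_diff_distrib algebra_simps)

lemma lie_br_msc_msc: "lie_br (msc a g) (msc b g) = 0"
  by (simp add: Finite_Cartesian_Product.vec_eq_iff lie_br_nth algebra_simps sum_distrib_left)

lemma msc_add_left: "msc (a + b) X = msc a X + msc b X"
  by (simp add: Finite_Cartesian_Product.vec_eq_iff algebra_simps)

lemma msc_msc: "msc a (msc b X) = msc (a * b) X"
  by (simp add: Finite_Cartesian_Product.vec_eq_iff)

lemma msc_sum_msc: "msc a (\<Sum>k\<in>S. msc (f k) (g k)) = (\<Sum>k\<in>S. msc (a * f k) (g k))"
  by (simp add: Finite_Cartesian_Product.vec_eq_iff sum_distrib_left mult.assoc)

lemma sum_msc: "(\<Sum>k\<in>S. msc (f k) X) = msc (\<Sum>k\<in>S. f k) X"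
  by (simp add: Finite_Cartesian_Product.vec_eq_iff sum_distrib_right)

lemma msc_eq_0_iff: "msc a X = 0 \<longleftrightarrow> a = 0 \<or> X = 0"
  by (auto simp: Finite_Cartesian_Product.vec_eq_iff)

lemma norm_nth_nth_le: "cmod ((A::complex^2^2) $ p $ q) \<le> norm A"
  by (meson Finite_Cartesian_Product.norm_nth_le order_trans)

text \<open>On traceless matrices \<open>mu A = - det A\<close>, the quadratic form whose null cone is the nilpotent cone.\<close>

definition mu :: "complex^2^2 \<Rightarrow> complex" where
  "mu A = A$1$1^2 + A$1$2 * A$2$1"

lemma mu_add_self: "mu (A + A) = 4 * mu A"
  by (simp add: mu_def algebra_simps power2_eq_square)

lemma norm_mu_le: "cmod (mu A) \<le> 2 * (norm A)^2"
proof -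
  have "cmod (mu A) \<le> cmod (A$1$1)^2 + cmod (A$1$2) * cmod (A$2$1)"
    unfolding mu_def by (metis norm_mult norm_power norm_triangle_ineq)
  also have "\<dots> \<le> (norm A)^2 + norm A * norm A"
    by (intro add_mono power_mono mult_mono norm_nth_nth_le) auto
  finally show ?thesis by (simp add: power2_eq_square)
qed

lemma lie_br_cube_sl2:
  assumes "A \<in> sl2"
  shows "lie_br A (lie_br A (lie_br A B)) = msc (4 * mu A) (lie_br A B)"
  using assms unfolding mat2_eq_iff sl2_iff
  apply (simp add: lie_br_nth sum_2 mu_def)
  apply (intro conjI)
  apply (simp_all add: algebra_simps power2_eq_square)
  done

lemma lie_br_sl2_nth:
  assumes "A \<in> sl2" "B \<in> sl2"
  shows "lie_br A B $ 1 $ 1 = A$1$2 * B$2$1 - A$2$1 * B$1$2"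
    "lie_br A B $ 1 $ 2 = 2 * (A$1$1 * B$1$2 - A$1$2 * B$1$1)"
    "lie_br A B $ 2 $ 1 = 2 * (A$2$1 * B$1$1 - A$1$1 * B$2$1)"
    "lie_br A B $ 2 $ 2 = - (A$1$2 * B$2$1 - A$2$1 * B$1$2)"
  using assms unfolding sl2_iff by (simp_all add: lie_br_nth sum_2 algebra_simps)

text \<open>Isotropic, mutually orthogonal vectors for the form \<open>a\<^sup>2 + b c\<close> are proportional.\<close>

lemma isotropic_orthogonal_minors:
  fixes a b c x y z :: complex
  assumes h1: "a^2 + b*c = 0" and h2: "x^2 + y*z = 0" and h3: "2*a*x + b*z + c*y = 0"
  shows "a*y = b*x" "c*x = a*z" "b*z = c*y"
proof -
  have "(a*y - b*x)^2 = (a^2 + b*c)*y^2 + b^2*(x^2+y*z) - b*y*(2*a*x + b*z + c*y)"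
    by (simp add: algebra_simps power2_eq_square)
  then show "a*y = b*x" using h1 h2 h3 by simp
  have "(c*x - a*z)^2 = c^2*(x^2+y*z) + (a^2 + b*c)*z^2 - c*z*(2*a*x + b*z + c*y)"
    by (simp add: algebra_simps power2_eq_square)
  then show "c*x = a*z" using h1 h2 h3 by simp
  have "(b*z - c*y)^2 = (2*a*x + b*z + c*y) * (b*z + c*y - 2*a*x) + 4*x^2*(a^2 + b*c)
      - 4*b*c*(x^2+y*z)"
    by (simp add: algebra_simps power2_eq_square)
  then show "b*z = c*y" using h1 h2 h3 by simp
qed

lemma nilpotent_sum_commute:
  assumes "A \<in> sl2" "B \<in> sl2" "mu A = 0" "mu B = 0" "mu (A + B) = 0"
  shows "lie_br A B = 0"
proof -
  have "mu (A + B) = mu A + mu B + (2 * A$1$1 * B$1$1 + A$1$2 * B$2$1 + A$2$1 * B$1$2)"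
    by (simp add: mu_def algebra_simps power2_eq_square)
  with assms(3-5) have "2 * A$1$1 * B$1$1 + A$1$2 * B$2$1 + A$2$1 * B$1$2 = 0" by simp
  from isotropic_orthogonal_minors[OF _ _ this] assms(3,4)
  show ?thesis unfolding mat2_eq_iff lie_br_sl2_nth[OF assms(1,2)] by (simp add: mu_def)
qed

lemma sl2_centralizer:
  assumes "A \<in> sl2" "B \<in> sl2" "A \<noteq> 0" "lie_br A B = 0"
  shows "\<exists>t. B = msc t A"
proof -
  have "lie_br A B $ 1 $ 1 = 0" "lie_br A B $ 1 $ 2 = 0" "lie_br A B $ 2 $ 1 = 0"
    using assms(4) by simp_all
  then have r: "A$1$1 * B$1$2 = A$1$2 * B$1$1" "A$2$1 * B$1$1 = A$1$1 * B$2$1"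
      "A$1$2 * B$2$1 = A$2$1 * B$1$2"
    unfolding lie_br_sl2_nth[OF assms(1,2)] by simp_all
  consider "A$1$1 \<noteq> 0" | "A$1$1 = 0" "A$1$2 \<noteq> 0" | "A$1$1 = 0" "A$1$2 = 0" "A$2$1 \<noteq> 0"
    using assms(1,3) unfolding mat2_eq_iff sl2_iff by auto
  then show ?thesis
  proof cases
    case 1
    then show ?thesis using r assms(1,2) unfolding mat2_eq_iff sl2_iff
      by (intro exI[of _ "B$1$1 / A$1$1"]) (simp add: field_simps)
  next
    case 2
    then show ?thesis using r assms(1,2) unfolding mat2_eq_iff sl2_iff
      by (intro exI[of _ "B$1$2 / A$1$2"]) (simp add: field_simps)
  next
    case 3
    then show ?thesis using r assms(1,2) unfolding mat2_eq_iff sl2_iff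
      by (intro exI[of _ "B$2$1 / A$2$1"]) (simp add: field_simps)
  qed
qed

lemma lie_br_left_eigen:
  assumes A: "A \<in> sl2"
    and ad: "\<And>l. l < n \<Longrightarrow> lie_br A (X l) = (\<Sum>k<n. msc (M k l) (X k))"
    and l: "l < n"
  shows "(\<Sum>m<n. lie_br A (X m) $ p $ q * (\<Sum>k<n. M m k * M k l)) = 4 * mu A * lie_br A (X l) $ p $ q"
proof -
  have ad2: "lie_br A (lie_br A (X l)) = (\<Sum>m<n. msc (\<Sum>k<n. M m k * M k l) (X m))" if "l < n" for l
  proof -
    have "lie_br A (lie_br A (X l)) = (\<Sum>k<n. msc (M k l) (\<Sum>m<n. msc (M m k) (X m)))"
      unfolding ad[OF that] lie_br_sum_msc using ad by simp
    also have "\<dots> = (\<Sum>k<n. \<Sum>m<n. msc (M k l * M m k) (X m))"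
      by (simp add: msc_sum_msc)
    also have "\<dots> = (\<Sum>m<n. \<Sum>k<n. msc (M k l * M m k) (X m))"
      by (rule sum.swap)
    finally show ?thesis by (simp add: sum_msc mult.commute)
  qed
  have "msc (4 * mu A) (lie_br A (X l)) = (\<Sum>m<n. msc (\<Sum>k<n. M m k * M k l) (lie_br A (X m)))"
    unfolding lie_br_cube_sl2[OF A, symmetric] ad2[OF l] lie_br_sum_msc ..
  then have "msc (4 * mu A) (lie_br A (X l)) $ p $ q
      = (\<Sum>m<n. msc (\<Sum>k<n. M m k * M k l) (lie_br A (X m))) $ p $ q"
    by (rule arg_cong)
  then show ?thesis by (simp add: mult.commute)
qed

lemma commute_of_nilpotent_or_central:
  assumes X: "X \<in> sl2" and Y: "Y \<in> sl2"
    and dich: "\<And>A. A \<in> {X + X, Y + Y, X + Y} \<Longrightarrow> mu A = 0 \<or> (lie_br A X = 0 \<and> lie_br A Y = 0)"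
  shows "lie_br X Y = 0"
proof -
  have half: "Z + Z = 0 \<Longrightarrow> Z = (0::complex^2^2)" for Z
    by (simp add: Finite_Cartesian_Product.vec_eq_iff)
  consider "lie_br (X + X) Y = 0" | "lie_br (Y + Y) X = 0" | "lie_br (X + Y) Y = 0"
    | "mu (X + X) = 0" "mu (Y + Y) = 0" "mu (X + Y) = 0"
    using dich by blast
  then show ?thesis
  proof cases
    case 1
    then have "lie_br X Y + lie_br X Y = 0" by (simp only: lie_br_add_left)
    then show ?thesis by (rule half)
  next
    case 2
    then have "lie_br Y X + lie_br Y X = 0" by (simp only: lie_br_add_left)
    then have "lie_br Y X = 0" by (rule half)
    then show ?thesis by (simp add: lie_br_antisym[of X Y])
  next
    case 3
    then show ?thesis by (simp add: lie_br_add_left lie_br_self)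
  next
    case 4
    then show ?thesis using mu_add_self[of X] mu_add_self[of Y] nilpotent_sum_commute[OF X Y] by simp
  qed
qed

lemma commuting_sl2_family_on_line:
  assumes sl: "\<And>i. i < n \<Longrightarrow> \<phi> i \<in> sl2"
    and comm: "\<And>i j. i < n \<Longrightarrow> j < n \<Longrightarrow> lie_br (\<phi> i) (\<phi> j) = 0"
  obtains "\<forall>i<n. \<phi> i = 0"
    | g \<eta> where "g \<in> sl2" "g \<noteq> 0" "\<forall>i<n. \<phi> i = msc (\<eta> i) g"
proof (cases "\<forall>i<n. \<phi> i = 0")
  case True
  then show thesis by (rule that(1))
next
  case False
  then obtain p where p: "p < n" "\<phi> p \<noteq> 0" by auto
  have "\<forall>i\<in>{..<n}. \<exists>t. \<phi> i = msc t (\<phi> p)"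
    using sl2_centralizer[OF sl[OF p(1)] sl p(2) comm[OF p(1)]] by blast
  then obtain \<eta> where "\<forall>i\<in>{..<n}. \<phi> i = msc (\<eta> i) (\<phi> p)"
    by (rule bchoice[elim_format]) blast
  with p sl that(2) show thesis by blast
qed

lemma F1_CE_subset_F_CE: "F1_CE n c \<subseteq> F_CE n c"
proof
  fix \<phi> assume "\<phi> \<in> F1_CE n c"
  then obtain \<eta> g where hom: "\<phi> \<in> hom_space n" and closed: "\<forall>i<n. \<forall>j<n. (\<Sum>k<n. c i j k * \<eta> k) = 0"
    and \<phi>: "\<forall>i<n. \<phi> i = msc (\<eta> i) g"
    unfolding F1_CE_def by blast
  have "(\<Sum>k<n. msc (c i j k) (\<phi> k)) = msc (\<Sum>k<n. c i j k * \<eta> k) g" if "i < n" "j < n" for i j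
    using \<phi> by (simp add: msc_msc sum_msc)
  with closed \<phi> show "\<phi> \<in> F_CE n c"
    unfolding F_CE_def using hom by (simp add: lie_br_msc_msc msc_eq_0_iff)
qed

lemma commuting_F_CE_in_F1_CE:
  assumes \<phi>: "\<phi> \<in> F_CE n c" and comm: "\<And>i j. i < n \<Longrightarrow> j < n \<Longrightarrow> lie_br (\<phi> i) (\<phi> j) = 0"
  shows "\<phi> \<in> F1_CE n c"
proof -
  have hom: "\<phi> \<in> hom_space n"
    and br: "\<And>i j. i < n \<Longrightarrow> j < n \<Longrightarrow> lie_br (\<phi> i) (\<phi> j) = (\<Sum>k<n. msc (c i j k) (\<phi> k))"
    using \<phi> by (auto simp: F_CE_def)
  then have sl: "\<And>i. i < n \<Longrightarrow> \<phi> i \<in> sl2" by (simp add: hom_space_def)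
  show ?thesis
  proof (rule commuting_sl2_family_on_line[OF sl comm])
    assume "\<forall>i<n. \<phi> i = 0"
    then show ?thesis using hom unfolding F1_CE_def
      by (auto intro!: exI[of _ "\<lambda>_. 0"] exI[of _ 0] simp: sl2_iff msc_eq_0_iff)
  next
    fix g \<eta> assume g: "g \<in> sl2" "g \<noteq> 0" and \<phi>: "\<forall>i<n. \<phi> i = msc (\<eta> i) g"
    have "msc (\<Sum>k<n. c i j k * \<eta> k) g = 0" if "i < n" "j < n" for i j
      using br[OF that] comm[OF that] \<phi> by (simp add: msc_msc sum_msc)
    then show ?thesis using hom g \<phi> unfolding F1_CE_def by (auto simp: msc_eq_0_iff)
  qed
qed

text \<open>The coefficient of \<open>e\<^sub>k\<close> in \<open>[e\<^sub>i + e\<^sub>j, e\<^sub>l]\<close>.\<close>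

definition ad_sum_coeff :: "(nat \<Rightarrow> nat \<Rightarrow> nat \<Rightarrow> complex) \<Rightarrow> nat \<Rightarrow> nat \<Rightarrow> nat \<Rightarrow> nat \<Rightarrow> complex" where
  "ad_sum_coeff c i j k l = c i l k + c j l k"

lemma F_CE_lie_br_add:
  assumes "\<phi> \<in> F_CE n c" "i < n" "j < n" "l < n"
  shows "lie_br (\<phi> i + \<phi> j) (\<phi> l) = (\<Sum>k<n. msc (ad_sum_coeff c i j k l) (\<phi> k))"
  using assms by (simp add: F_CE_def lie_br_add_left ad_sum_coeff_def msc_add_left sum.distrib)

lemma F_CE_nilpotent_or_central:
  assumes \<phi>: "\<phi> \<in> F_CE n c" and ij: "i < n" "j < n"
    and no_eigen: "\<forall>r. (\<forall>l<n. (\<Sum>m<n. r m * (\<Sum>k<n. ad_sum_coeff c i j m k * ad_sum_coeff c i j k l))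
      = 4 * mu (\<phi> i + \<phi> j) * r l) \<longrightarrow> (\<forall>l<n. r l = 0)"
  shows "\<forall>l<n. lie_br (\<phi> i + \<phi> j) (\<phi> l) = 0"
proof -
  have A: "\<phi> i + \<phi> j \<in> sl2" using \<phi> ij by (simp add: F_CE_def hom_space_def sl2_add)
  have ad: "\<And>l. l < n \<Longrightarrow> lie_br (\<phi> i + \<phi> j) (\<phi> l) = (\<Sum>k<n. msc (ad_sum_coeff c i j k l) (\<phi> k))"
    by (rule F_CE_lie_br_add[OF \<phi> ij])
  note eigen = lie_br_left_eigen[OF A ad]
  have "\<forall>l<n. lie_br (\<phi> i + \<phi> j) (\<phi> l) $ p $ q = 0" for p q
    using spec[OF no_eigen, of "\<lambda>m. lie_br (\<phi> i + \<phi> j) (\<phi> m) $ p $ q"] eigen by auto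
  then show ?thesis by (simp add: Finite_Cartesian_Product.vec_eq_iff)
qed

lemma F_CE_small_commute:
  "\<exists>\<epsilon>>0. \<forall>\<phi>\<in>F_CE n c. (\<forall>i<n. norm (\<phi> i) < \<epsilon>) \<longrightarrow> (\<forall>i<n. \<forall>j<n. lie_br (\<phi> i) (\<phi> j) = 0)"
proof -
  have "\<forall>\<^sub>F s in at 0. \<forall>(i, j)\<in>{..<n} \<times> {..<n}. \<forall>r.
      (\<forall>l<n. (\<Sum>m<n. r m * (\<Sum>k<n. ad_sum_coeff c i j m k * ad_sum_coeff c i j k l)) = s * r l)
      \<longrightarrow> (\<forall>l<n. r l = 0)"
    by (intro eventually_ball_finite) (auto intro: eventually_no_left_eigenvector)
  then obtain \<delta> where \<delta>: "\<delta> > 0" and no_eigen: "\<And>s i j. s \<noteq> 0 \<Longrightarrow> cmod s < \<delta> \<Longrightarrow> i < n \<Longrightarrow> j < n \<Longrightarrow>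
      \<forall>r. (\<forall>l<n. (\<Sum>m<n. r m * (\<Sum>k<n. ad_sum_coeff c i j m k * ad_sum_coeff c i j k l)) = s * r l)
      \<longrightarrow> (\<forall>l<n. r l = 0)"
    unfolding eventually_at by (auto simp: dist_norm)
  define \<epsilon> where "\<epsilon> = min 1 \<delta> / 8"
  have "\<forall>i<n. \<forall>j<n. lie_br (\<phi> i) (\<phi> j) = 0"
    if \<phi>: "\<phi> \<in> F_CE n c" and small: "\<forall>i<n. norm (\<phi> i) < \<epsilon>" for \<phi>
  proof (intro allI impI)
    fix i j assume ij: "i < n" "j < n"
    have sl: "\<And>i. i < n \<Longrightarrow> \<phi> i \<in> sl2" using \<phi> by (simp add: F_CE_def hom_space_def)
    have "mu (\<phi> a + \<phi> b) = 0 \<or> (\<forall>l<n. lie_br (\<phi> a + \<phi> b) (\<phi> l) = 0)"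
      if ab: "a < n" "b < n" for a b
    proof (cases "mu (\<phi> a + \<phi> b) = 0")
      case False
      have "norm (\<phi> a + \<phi> b) < 2 * \<epsilon>"
        using add_strict_mono[of "norm (\<phi> a)" \<epsilon> "norm (\<phi> b)" \<epsilon>] small ab
        by (intro norm_triangle_lt) auto
      then have "(norm (\<phi> a + \<phi> b))^2 < (2 * \<epsilon>)^2"
        by (intro power_strict_mono) auto
      then have "cmod (4 * mu (\<phi> a + \<phi> b)) < 8 * (2 * \<epsilon>)^2"
        using norm_mu_le[of "\<phi> a + \<phi> b"] by (simp add: norm_mult)
      also have "\<dots> \<le> \<delta>" unfolding \<epsilon>_def using \<delta> by (simp add: power2_eq_square min_def)
      finally have "cmod (4 * mu (\<phi> a + \<phi> b)) < \<delta>" .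
      with False show ?thesis
        using F_CE_nilpotent_or_central[OF \<phi> ab no_eigen[OF _ _ ab]] by simp
    qed simp
    then show "lie_br (\<phi> i) (\<phi> j) = 0"
      using commute_of_nilpotent_or_central[OF sl[OF ij(1)] sl[OF ij(2)]] ij by blast
  qed
  moreover have "\<epsilon> > 0" unfolding \<epsilon>_def using \<delta> by simp
  ultimately show ?thesis by blast
qed

theorem corollary4p6:
  fixes n :: nat and c :: "nat \<Rightarrow> nat \<Rightarrow> nat \<Rightarrow> complex"
  assumes "is_lie_struct n c"
  shows "germ_eq_at0 n (F_CE n c) (F1_CE n c)"
proof -
  obtain \<epsilon> where "\<epsilon> > 0" and "\<forall>\<phi>\<in>F_CE n c. (\<forall>i<n. norm (\<phi> i) < \<epsilon>) \<longrightarrow>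
      (\<forall>i<n. \<forall>j<n. lie_br (\<phi> i) (\<phi> j) = 0)"
    using F_CE_small_commute by blast
  then show ?thesis
    unfolding germ_eq_at0_def using F1_CE_subset_F_CE commuting_F_CE_in_F1_CE by blast
qed

end
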